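(* Let $\Lambda$ be the preprojective algebra of a simply-laced Dynkin graph $\Delta$ over an algebraically closed field $K$, with primitive idempotents $e_i$ ($i\in\Delta_0$). Let $\phi\in\mathrm{Aut}(\Lambda)$, and let $\rho^\phi$ be the permutation of $\Delta_0$ such that $\phi(e_i)=\lambda e_{\rho^\phi(i)}\lambda^{-1}$ for all $i\in\Delta_0$ for some unit $\lambda\in\Lambda^\times$. Then $\rho^\phi$ is a graph automorphism of $\Delta$.
   Context: For every $\phi\in\mathrm{Aut}(\Lambda)$ there exist a unit $\lambda\in\Lambda^\times$ and a unique permutation $\rho^\phi$ of $\Delta_0$ with $\phi(e_i)=\lambda e_{\rho^\phi(i)}\lambda^{-1}$ for all $i$; $\rho^\phi$ depends only on the class of $\phi$ in $\mathrm{Out}(\Lambda)=\mathrm{Aut}(\Lambda)/\mathrm{Inn}(\Lambda)$. *)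

theory Defs
  imports "HOL-Algebra.QuotRing"
begin

definition alg_closed :: "'k::field itself \<Rightarrow> bool" where
  "alg_closed _ \<longleftrightarrow> (\<forall>cs::'k list. length cs \<ge> 2 \<and> last cs \<noteq> 0 \<longrightarrow>
      (\<exists>x. (\<Sum>i<length cs. cs ! i * x ^ i) = 0))"

definition simple_graph :: "nat set \<Rightarrow> (nat \<Rightarrow> nat \<Rightarrow> bool) \<Rightarrow> bool" where
  "simple_graph V E \<longleftrightarrow> finite V \<and> (\<forall>i j. E i j \<longrightarrow> i \<in> V \<and> j \<in> V)
     \<and> (\<forall>i j. E i j \<longrightarrow> E j i) \<and> (\<forall>i. \<not> E i i)"

definition graph_iso :: "nat set \<Rightarrow> (nat \<Rightarrow> nat \<Rightarrow> bool) \<Rightarrow> nat set \<Rightarrow> (nat \<Rightarrow> nat \<Rightarrow> bool) \<Rightarrow> bool" where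
  "graph_iso V E W F \<longleftrightarrow> (\<exists>f. bij_betw f V W \<and> (\<forall>i\<in>V. \<forall>j\<in>V. E i j \<longleftrightarrow> F (f i) (f j)))"

definition line_edge :: "nat \<Rightarrow> nat \<Rightarrow> nat \<Rightarrow> bool" where
  "line_edge m i j \<longleftrightarrow> i < m \<and> j < m \<and> (j = i + 1 \<or> i = j + 1)"

definition dynkinA :: "nat \<Rightarrow> nat \<Rightarrow> nat \<Rightarrow> bool" where
  "dynkinA n = line_edge n"

definition dynkinD :: "nat \<Rightarrow> nat \<Rightarrow> nat \<Rightarrow> bool" where
  "dynkinD n i j \<longleftrightarrow> line_edge (n - 1) i j \<or> (i = n - 3 \<and> j = n - 1) \<or> (i = n - 1 \<and> j = n - 3)"

definition dynkinE :: "nat \<Rightarrow> nat \<Rightarrow> nat \<Rightarrow> bool" where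
  "dynkinE n i j \<longleftrightarrow> line_edge (n - 1) i j \<or> (i = 2 \<and> j = n - 1) \<or> (i = n - 1 \<and> j = 2)"

definition simply_laced_dynkin :: "nat set \<Rightarrow> (nat \<Rightarrow> nat \<Rightarrow> bool) \<Rightarrow> bool" where
  "simply_laced_dynkin V E \<longleftrightarrow> simple_graph V E \<and>
     ((\<exists>n\<ge>1. graph_iso V E {0..<n} (dynkinA n)) \<or>
      (\<exists>n\<ge>4. graph_iso V E {0..<n} (dynkinD n)) \<or>
      (\<exists>n\<in>{6,7,8}. graph_iso V E {0..<n} (dynkinE n)))"

definition graph_aut :: "nat set \<Rightarrow> (nat \<Rightarrow> nat \<Rightarrow> bool) \<Rightarrow> (nat \<Rightarrow> nat) \<Rightarrow> bool" where
  "graph_aut V E \<rho> \<longleftrightarrow> bij_betw \<rho> V V \<and> (\<forall>i\<in>V. \<forall>j\<in>V. E i j \<longleftrightarrow> E (\<rho> i) (\<rho> j))"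

text \<open>The double quiver of a simple graph has arrows i -> j and j -> i for each edge {i,j}.
  A path is a nonempty list of vertices, consecutive ones adjacent; [i] is the trivial path e_i.
  Paths p and q compose (p then q) when last p = hd q, giving p @ tl q.\<close>

definition valid_path :: "nat set \<Rightarrow> (nat \<Rightarrow> nat \<Rightarrow> bool) \<Rightarrow> nat list \<Rightarrow> bool" where
  "valid_path V E p \<longleftrightarrow> p \<noteq> [] \<and> set p \<subseteq> V \<and> (\<forall>k. Suc k < length p \<longrightarrow> E (p ! k) (p ! Suc k))"

definition path_algebra :: "nat set \<Rightarrow> (nat \<Rightarrow> nat \<Rightarrow> bool) \<Rightarrow> (nat list \<Rightarrow> 'k::field) ring" where
  "path_algebra V E = \<lparr>
     carrier = {x. (\<forall>p. x p \<noteq> 0 \<longrightarrow> valid_path V E p) \<and> finite {p. x p \<noteq> 0}},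
     mult = (\<lambda>x y r. if valid_path V E r
                      then (\<Sum>k<length r. x (take (Suc k) r) * y (drop k r)) else 0),
     one = (\<lambda>p. if length p = 1 \<and> hd p \<in> V then 1 else 0),
     zero = (\<lambda>p. 0),
     add = (\<lambda>x y p. x p + y p) \<rparr>"

definition pa_scalar :: "nat set \<Rightarrow> (nat \<Rightarrow> nat \<Rightarrow> bool) \<Rightarrow> 'k::field \<Rightarrow> nat list \<Rightarrow> 'k" where
  "pa_scalar V E c = (\<lambda>p. c * one (path_algebra V E :: (nat list \<Rightarrow> 'k) ring) p)"

definition triv_path :: "nat \<Rightarrow> nat list \<Rightarrow> 'k::field" where
  "triv_path i = (\<lambda>p. if p = [i] then 1 else 0)"

text \<open>Preprojective relation at vertex i, w.r.t. the orientation i -> j whenever i < j: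
  sum over neighbours j of sign(i,j) * (i -> j -> i), i.e. the e_i-component of
  sum over arrows a of (a a^* - a^* a).\<close>
definition preproj_rel :: "nat set \<Rightarrow> (nat \<Rightarrow> nat \<Rightarrow> bool) \<Rightarrow> nat \<Rightarrow> nat list \<Rightarrow> 'k::field" where
  "preproj_rel V E i = (\<lambda>p. if (\<exists>j\<in>V. E i j \<and> p = [i, j, i])
       then (if i < p ! 1 then 1 else -1) else 0)"

definition preproj_ideal :: "nat set \<Rightarrow> (nat \<Rightarrow> nat \<Rightarrow> bool) \<Rightarrow> (nat list \<Rightarrow> 'k::field) set" where
  "preproj_ideal V E = genideal (path_algebra V E) (preproj_rel V E ` V)"

definition preproj_algebra :: "nat set \<Rightarrow> (nat \<Rightarrow> nat \<Rightarrow> bool) \<Rightarrow> (nat list \<Rightarrow> 'k::field) set ring" where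
  "preproj_algebra V E = path_algebra V E Quot preproj_ideal V E"

definition pp_class :: "nat set \<Rightarrow> (nat \<Rightarrow> nat \<Rightarrow> bool) \<Rightarrow> (nat list \<Rightarrow> 'k::field) \<Rightarrow> (nat list \<Rightarrow> 'k) set" where
  "pp_class V E x = preproj_ideal V E +>\<^bsub>path_algebra V E\<^esub> x"

text \<open>K-algebra automorphisms: ring automorphisms fixing the scalars K * 1.\<close>
definition preproj_aut :: "nat set \<Rightarrow> (nat \<Rightarrow> nat \<Rightarrow> bool) \<Rightarrow>
    ((nat list \<Rightarrow> 'k::field) set \<Rightarrow> (nat list \<Rightarrow> 'k) set) set" where
  "preproj_aut V E = {\<phi>. \<phi> \<in> ring_iso (preproj_algebra V E) (preproj_algebra V E) \<and>
      (\<forall>c::'k. \<phi> (pp_class V E (pa_scalar V E c)) = pp_class V E (pa_scalar V E c))}"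

end

theory Submission
  imports Defs
begin

text \<open>
  Write J for the arrow ideal of the preprojective algebra. An arrow a from i to j satisfies
  a = e_i a e_j, so phi(a) is conjugate by u to e_(rho i) w e_(rho j) for some w, which lies in J
  because rho i and rho j differ; hence phi maps J, and therefore every power of J, into itself.
  Suppose rho i and rho j are adjacent but i and j are not, let b be the arrow from rho i to
  rho j and choose c with phi(c) = u b u^-1. As no path of length at most one joins i to j,
  e_i c e_j lies in J^2, so its image u (e_(rho i) b e_(rho j)) u^-1 = u b u^-1 does too, and
  b lies in J^2. This is impossible since the preprojective relations are quadratic. Hence
  rho reflects adjacency, and a bijection of a finite graph that reflects adjacency preserves it.
\<close>

lemma sum_triangle_shift:
  "(\<Sum>k<n. \<Sum>m<Suc k. f m k) = (\<Sum>m<n. \<Sum>l<n - m. (f m (m + l) :: 'a::comm_monoid_add))"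
proof (induction n)
  case (Suc n)
  have "(\<Sum>m<Suc n. \<Sum>l<Suc n - m. f m (m + l)) = (\<Sum>m<Suc n. (\<Sum>l<n - m. f m (m + l)) + f m n)"
  proof (rule sum.cong[OF refl])
    fix m assume "m \<in> {..<Suc n}"
    then have "Suc n - m = Suc (n - m)" "m + (n - m) = n" by auto
    then show "(\<Sum>l<Suc n - m. f m (m + l)) = (\<Sum>l<n - m. f m (m + l)) + f m n"
      by simp
  qed
  also have "\<dots> = (\<Sum>m<n. \<Sum>l<n - m. f m (m + l)) + (\<Sum>m<Suc n. f m n)"
    by (simp add: sum.distrib)
  finally show ?case using Suc by simp
qed simp

lemma (in monoid) Units_inv_conj_cancel:
  assumes u: "u \<in> Units G" and m: "m \<in> carrier G"
  shows "inv u \<otimes> (u \<otimes> m \<otimes> inv u) \<otimes> u = m"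
proof -
  have "u \<in> carrier G" "inv u \<in> carrier G" using u by auto
  then have "inv u \<otimes> (u \<otimes> m \<otimes> inv u) \<otimes> u = (inv u \<otimes> u) \<otimes> m \<otimes> (inv u \<otimes> u)"
    using m by (simp add: m_assoc)
  then show ?thesis using u m by simp
qed

lemma (in ideal) Units_conj_mem_iff:
  assumes u: "u \<in> Units R" and m: "m \<in> carrier R"
  shows "u \<otimes> m \<otimes> inv u \<in> I \<longleftrightarrow> m \<in> I"
proof -
  have uc: "u \<in> carrier R" "inv u \<in> carrier R" using u by auto
  show ?thesis
  proof
    assume "u \<otimes> m \<otimes> inv u \<in> I"
    then have "inv u \<otimes> (u \<otimes> m \<otimes> inv u) \<otimes> u \<in> I"
      using uc by (simp add: I_l_closed I_r_closed)
    then show "m \<in> I" using u m by (simp add: Units_inv_conj_cancel)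
  next
    assume "m \<in> I"
    then show "u \<otimes> m \<otimes> inv u \<in> I" using uc m by (simp add: I_l_closed I_r_closed)
  qed
qed

lemma bij_betw_reflects_imp_preserves:
  assumes "finite R" "bij_betw f A A" "R \<subseteq> A \<times> A"
    and reflects: "\<And>x y. x \<in> A \<Longrightarrow> y \<in> A \<Longrightarrow> (f x, f y) \<in> R \<Longrightarrow> (x, y) \<in> R"
    and "(x, y) \<in> R"
  shows "(f x, f y) \<in> R"
proof -
  define S where "S = {(x, y) \<in> A \<times> A. (f x, f y) \<in> R}"
  have "S \<subseteq> R" using reflects by (auto simp: S_def)
  have "inj_on (map_prod f f) S"
    using assms(2) by (auto simp: S_def bij_betw_def inj_on_def)
  moreover have "map_prod f f ` S = R"
  proof
    show "R \<subseteq> map_prod f f ` S"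
    proof
      fix p assume "p \<in> R"
      then obtain c d where "p = (c, d)" "c \<in> f ` A" "d \<in> f ` A"
        using assms(2,3) by (auto simp: bij_betw_def)
      then obtain a b where "p = (f a, f b)" "a \<in> A" "b \<in> A" by blast
      with \<open>p \<in> R\<close> show "p \<in> map_prod f f ` S" by (auto simp: S_def)
    qed
  qed (auto simp: S_def)
  ultimately have "card S = card R" by (metis card_image)
  then have "S = R" using card_subset_eq[OF \<open>finite R\<close> \<open>S \<subseteq> R\<close>] by blast
  with \<open>(x, y) \<in> R\<close> show ?thesis by (auto simp: S_def)
qed

section \<open>The path algebra of the double quiver\<close>

lemma valid_path_not_Nil: "valid_path V E p \<Longrightarrow> p \<noteq> []"
  by (simp add: valid_path_def)

lemma valid_path_take: "valid_path V E p \<Longrightarrow> 0 < k \<Longrightarrow> valid_path V E (take k p)"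
  unfolding valid_path_def by (auto dest: in_set_takeD)

lemma valid_path_drop: "valid_path V E p \<Longrightarrow> k < length p \<Longrightarrow> valid_path V E (drop k p)"
  unfolding valid_path_def by (auto dest: in_set_dropD)

lemma valid_path_singleton: "i \<in> V \<Longrightarrow> valid_path V E [i]"
  by (simp add: valid_path_def)

lemma path_algebra_simps:
  "carrier (path_algebra V E) =
     {x :: nat list \<Rightarrow> 'k::field. (\<forall>p. x p \<noteq> 0 \<longrightarrow> valid_path V E p) \<and> finite {p. x p \<noteq> 0}}"
  "x \<otimes>\<^bsub>path_algebra V E\<^esub> y = (\<lambda>r. if valid_path V E r
     then (\<Sum>k<length r. x (take (Suc k) r) * y (drop k r)) else 0)"
  "x \<oplus>\<^bsub>path_algebra V E\<^esub> y = (\<lambda>p. x p + y p)"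
  "\<zero>\<^bsub>path_algebra V E\<^esub> = (\<lambda>p. 0)"
  "\<one>\<^bsub>path_algebra V E\<^esub> = (\<lambda>p. if length p = 1 \<and> hd p \<in> V then 1 else 0)"
  by (simp_all add: path_algebra_def)

lemma path_algebra_elem_valid:
  "x \<in> carrier (path_algebra V E) \<Longrightarrow> x p \<noteq> 0 \<Longrightarrow> valid_path V E p"
  by (simp add: path_algebra_simps)

lemma path_algebra_mult_assoc:
  fixes x y z :: "nat list \<Rightarrow> 'k::field"
  shows "(x \<otimes>\<^bsub>path_algebra V E\<^esub> y) \<otimes>\<^bsub>path_algebra V E\<^esub> z =
    x \<otimes>\<^bsub>path_algebra V E\<^esub> (y \<otimes>\<^bsub>path_algebra V E\<^esub> z)"
proof
  fix r
  show "((x \<otimes>\<^bsub>path_algebra V E\<^esub> y) \<otimes>\<^bsub>path_algebra V E\<^esub> z) r =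
    (x \<otimes>\<^bsub>path_algebra V E\<^esub> (y \<otimes>\<^bsub>path_algebra V E\<^esub> z)) r"
  proof (cases "valid_path V E r")
    case True
    (* both sides sum x p * y q * z s over the ways of cutting r at two positions m <= k *)
    define n where "n = length r"
    define f where "f m k = x (take (Suc m) r) * y (drop m (take (Suc k) r)) * z (drop k r)" for m k
    have "((x \<otimes>\<^bsub>path_algebra V E\<^esub> y) \<otimes>\<^bsub>path_algebra V E\<^esub> z) r =
      (\<Sum>k<n. (\<Sum>m<Suc k. x (take (Suc m) (take (Suc k) r)) * y (drop m (take (Suc k) r))) * z (drop k r))"
      using True by (auto simp: path_algebra_simps n_def valid_path_take intro!: sum.cong)
    also have "\<dots> = (\<Sum>k<n. \<Sum>m<Suc k. f m k)"
      unfolding f_def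
      by (intro sum.cong refl) (simp add: sum_distrib_right min_def del: sum.lessThan_Suc)
    also have "\<dots> = (\<Sum>m<n. \<Sum>l<n - m. f m (m + l))"
      by (rule sum_triangle_shift)
    also have "\<dots> = (\<Sum>m<n. x (take (Suc m) r) *
        (\<Sum>l<n - m. y (take (Suc l) (drop m r)) * z (drop l (drop m r))))"
      unfolding f_def
      by (intro sum.cong refl) (simp add: sum_distrib_left take_drop add.commute mult.assoc)
    also have "\<dots> = (x \<otimes>\<^bsub>path_algebra V E\<^esub> (y \<otimes>\<^bsub>path_algebra V E\<^esub> z)) r"
      using True by (auto simp: path_algebra_simps n_def valid_path_drop intro!: sum.cong)
    finally show ?thesis .
  qed (simp add: path_algebra_simps)
qed

lemma path_algebra_mult_closed:
  assumes "x \<in> carrier (path_algebra V E)" "y \<in> carrier (path_algebra V E)"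
  shows "x \<otimes>\<^bsub>path_algebra V E\<^esub> y \<in> carrier (path_algebra V E :: (nat list \<Rightarrow> 'k::field) ring)"
proof -
  let ?m = "x \<otimes>\<^bsub>path_algebra V E\<^esub> y"
  have "{r. ?m r \<noteq> 0} \<subseteq> (\<lambda>(p, q). p @ tl q) ` ({p. x p \<noteq> 0} \<times> {q. y q \<noteq> 0})"
  proof
    fix r assume "r \<in> {r. ?m r \<noteq> 0}"
    then have "(\<Sum>k<length r. x (take (Suc k) r) * y (drop k r)) \<noteq> 0"
      by (auto simp: path_algebra_simps split: if_splits)
    then obtain k where k: "k < length r" "x (take (Suc k) r) * y (drop k r) \<noteq> 0"
      using sum.not_neutral_contains_not_neutral by blast
    have "r = take (Suc k) r @ tl (drop k r)"
      by (metis append_take_drop_id drop_Suc tl_drop)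
    then show "r \<in> (\<lambda>(p, q). p @ tl q) ` ({p. x p \<noteq> 0} \<times> {q. y q \<noteq> 0})"
      using k by (intro image_eqI[where x="(take (Suc k) r, drop k r)"]) auto
  qed
  moreover have "finite ({p. x p \<noteq> 0} \<times> {q. y q \<noteq> 0})"
    using assms by (simp add: path_algebra_simps)
  ultimately have "finite {r. ?m r \<noteq> 0}"
    by (meson finite_imageI finite_subset)
  then show ?thesis by (auto simp: path_algebra_simps)
qed

lemma path_algebra_add_closed:
  assumes "x \<in> carrier (path_algebra V E)" "y \<in> carrier (path_algebra V E)"
  shows "x \<oplus>\<^bsub>path_algebra V E\<^esub> y \<in> carrier (path_algebra V E :: (nat list \<Rightarrow> 'k::field) ring)"
proof -
  have "{p. x p + y p \<noteq> 0} \<subseteq> {p. x p \<noteq> 0} \<union> {p. y p \<noteq> 0}" by auto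
  then show ?thesis using assms by (auto simp: path_algebra_simps intro: finite_subset)
qed

lemma path_algebra_mult_vertex_left:
  assumes z: "\<forall>p. length p \<noteq> 1 \<longrightarrow> z p = 0" and y: "y \<in> carrier (path_algebra V E)"
  shows "z \<otimes>\<^bsub>path_algebra V E\<^esub> y = (\<lambda>r. z [hd r] * (y r :: 'k::field))"
proof
  fix r
  show "(z \<otimes>\<^bsub>path_algebra V E\<^esub> y) r = z [hd r] * y r"
  proof (cases "valid_path V E r")
    case True
    then have "r \<noteq> []" by (rule valid_path_not_Nil)
    then have "(\<Sum>k<length r. z (take (Suc k) r) * y (drop k r)) =
        (\<Sum>k<length r. if k = 0 then z [hd r] * y r else 0)"
      using z by (intro sum.cong refl) (auto simp: min_def take_Suc)
    with True \<open>r \<noteq> []\<close> show ?thesis by (simp add: path_algebra_simps)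
  qed (use y in \<open>auto simp: path_algebra_simps\<close>)
qed

lemma path_algebra_mult_vertex_right:
  assumes z: "\<forall>p. length p \<noteq> 1 \<longrightarrow> z p = 0" and y: "y \<in> carrier (path_algebra V E)"
  shows "y \<otimes>\<^bsub>path_algebra V E\<^esub> z = (\<lambda>r. (y r :: 'k::field) * z [last r])"
proof
  fix r
  show "(y \<otimes>\<^bsub>path_algebra V E\<^esub> z) r = y r * z [last r]"
  proof (cases "valid_path V E r")
    case True
    then have "r \<noteq> []" by (rule valid_path_not_Nil)
    have "y (take (Suc k) r) * z (drop k r) = (if k = length r - 1 then y r * z [last r] else 0)"
      if k: "k < length r" for k
    proof (cases "k = length r - 1")
      case True
      then have "length (drop k r) = 1" using k by simp
      then obtain a where "drop k r = [a]" by (cases "drop k r") auto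
      moreover have "last (drop k r) = last r" using k by simp
      ultimately show ?thesis using True k by simp
    qed (use z k in auto)
    then have "(\<Sum>k<length r. y (take (Suc k) r) * z (drop k r)) =
        (\<Sum>k<length r. if k = length r - 1 then y r * z [last r] else 0)"
      by (intro sum.cong) auto
    with True \<open>r \<noteq> []\<close> show ?thesis by (simp add: path_algebra_simps)
  qed (use y in \<open>auto simp: path_algebra_simps\<close>)
qed

lemma path_algebra_one_closed:
  assumes "finite V"
  shows "\<one>\<^bsub>path_algebra V E\<^esub> \<in> carrier (path_algebra V E :: (nat list \<Rightarrow> 'k::field) ring)"
proof -
  have "{p. \<one>\<^bsub>path_algebra V E\<^esub> p \<noteq> (0::'k)} \<subseteq> (\<lambda>i. [i]) ` V"
    by (auto simp: path_algebra_simps length_Suc_conv)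
  then have "finite {p. \<one>\<^bsub>path_algebra V E\<^esub> p \<noteq> (0::'k)}"
    using assms by (rule finite_subset[OF _ finite_imageI])
  then show ?thesis
    by (auto simp: path_algebra_simps valid_path_def length_Suc_conv)
qed

lemma path_algebra_ends_in_V:
  assumes "x \<in> carrier (path_algebra V E)" "x r \<noteq> 0"
  shows "hd r \<in> V \<and> last r \<in> V"
proof -
  have "r \<noteq> []" "set r \<subseteq> V"
    using path_algebra_elem_valid[OF assms] by (auto simp: valid_path_def)
  then show ?thesis using hd_in_set last_in_set by blast
qed

lemma ring_path_algebra:
  assumes "finite V"
  shows "ring (path_algebra V E :: (nat list \<Rightarrow> 'k::field) ring)"
proof (rule ringI)
  show "abelian_group (path_algebra V E :: (nat list \<Rightarrow> 'k) ring)"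
  proof (rule abelian_groupI)
    fix x :: "nat list \<Rightarrow> 'k" assume "x \<in> carrier (path_algebra V E)"
    then show "\<exists>y\<in>carrier (path_algebra V E). y \<oplus>\<^bsub>path_algebra V E\<^esub> x = \<zero>\<^bsub>path_algebra V E\<^esub>"
      by (intro bexI[where x="\<lambda>p. - x p"]) (auto simp: path_algebra_simps)
  next
    fix x y :: "nat list \<Rightarrow> 'k"
    assume "x \<in> carrier (path_algebra V E)" "y \<in> carrier (path_algebra V E)"
    then show "x \<oplus>\<^bsub>path_algebra V E\<^esub> y \<in> carrier (path_algebra V E)"
      by (rule path_algebra_add_closed)
  qed (auto simp: path_algebra_simps ac_simps)
  have one_left: "\<forall>p. length p \<noteq> 1 \<longrightarrow> \<one>\<^bsub>path_algebra V E\<^esub> p = (0::'k)"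
    by (simp add: path_algebra_simps)
  show "monoid (path_algebra V E :: (nat list \<Rightarrow> 'k) ring)"
  proof (rule monoidI)
    fix x :: "nat list \<Rightarrow> 'k" assume x: "x \<in> carrier (path_algebra V E)"
    show "\<one>\<^bsub>path_algebra V E\<^esub> \<otimes>\<^bsub>path_algebra V E\<^esub> x = x"
      unfolding path_algebra_mult_vertex_left[OF one_left x]
      using path_algebra_ends_in_V[OF x] by (intro ext) (auto simp: path_algebra_simps)
    show "x \<otimes>\<^bsub>path_algebra V E\<^esub> \<one>\<^bsub>path_algebra V E\<^esub> = x"
      unfolding path_algebra_mult_vertex_right[OF one_left x]
      using path_algebra_ends_in_V[OF x] by (intro ext) (auto simp: path_algebra_simps)
  qed (auto simp: path_algebra_mult_closed path_algebra_one_closed assms path_algebra_mult_assoc)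
qed (auto simp: path_algebra_simps distrib_left distrib_right sum.distrib)

lemma path_algebra_mult_scalar_left:
  assumes "y \<in> carrier (path_algebra V E)"
  shows "pa_scalar V E c \<otimes>\<^bsub>path_algebra V E\<^esub> y = (\<lambda>r. c * (y r :: 'k::field))"
proof -
  have "\<forall>p. length p \<noteq> 1 \<longrightarrow> pa_scalar V E c p = (0::'k)"
    by (simp add: pa_scalar_def path_algebra_simps)
  then have "pa_scalar V E c \<otimes>\<^bsub>path_algebra V E\<^esub> y = (\<lambda>r. pa_scalar V E c [hd r] * y r)"
    using assms by (rule path_algebra_mult_vertex_left)
  also have "\<dots> = (\<lambda>r. c * y r)"
    using path_algebra_ends_in_V[OF assms] by (intro ext) (auto simp: pa_scalar_def path_algebra_simps)
  finally show ?thesis .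
qed

lemma pa_scalar_closed:
  assumes "finite V"
  shows "pa_scalar V E c \<in> carrier (path_algebra V E :: (nat list \<Rightarrow> 'k::field) ring)"
  using path_algebra_one_closed[OF assms, where 'k='k]
  by (auto simp: path_algebra_simps pa_scalar_def elim!: finite_subset[rotated])

definition basis_path :: "nat list \<Rightarrow> nat list \<Rightarrow> 'k::field" where
  "basis_path p = (\<lambda>r. if r = p then 1 else 0)"

lemma triv_path_eq_basis_path: "triv_path i = basis_path [i]"
  by (simp add: triv_path_def basis_path_def)

lemma basis_path_carrier:
  "valid_path V E p \<Longrightarrow> (basis_path p :: nat list \<Rightarrow> 'k::field) \<in> carrier (path_algebra V E)"
  by (auto simp: path_algebra_simps basis_path_def)

lemma basis_path_Cons_Cons:
  assumes "valid_path V E (a # b # q)"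
  shows "(basis_path (a # b # q) :: nat list \<Rightarrow> 'k::field) =
    basis_path [a, b] \<otimes>\<^bsub>path_algebra V E\<^esub> basis_path (b # q)"
proof
  fix r
  have "basis_path [a, b] (take (Suc k) r) * basis_path (b # q) (drop k r) =
      (if k = 1 then basis_path (a # b # q) r else (0::'k))" if "k < length r" for k
  proof (cases "k = 1")
    case True
    have "take 2 r = [a, b] \<and> drop 1 r = b # q \<longleftrightarrow> r = a # b # q"
      by (cases r; cases "tl r") auto
    with True show ?thesis by (auto simp: basis_path_def numeral_2_eq_2)
  next
    case False
    then have "length (take (Suc k) r) \<noteq> length [a, b]" using that by simp
    then have "take (Suc k) r \<noteq> [a, b]" by metis
    with False show ?thesis by (simp add: basis_path_def)
  qed
  then have "(\<Sum>k<length r. basis_path [a, b] (take (Suc k) r) * basis_path (b # q) (drop k r)) =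
      (\<Sum>k<length r. if k = 1 then basis_path (a # b # q) r else (0::'k))"
    by (intro sum.cong) auto
  also have "\<dots> = basis_path (a # b # q) r"
    by (cases "r = a # b # q") (auto simp: basis_path_def not_less le_Suc_eq)
  moreover have "basis_path (a # b # q) r = (0::'k)" if "\<not> valid_path V E r"
    using assms that by (auto simp: basis_path_def)
  ultimately show "(basis_path (a # b # q) r :: 'k) =
      (basis_path [a, b] \<otimes>\<^bsub>path_algebra V E\<^esub> basis_path (b # q)) r"
    by (simp add: path_algebra_simps)
qed

section \<open>Powers of the arrow ideal\<close>

text \<open>A path [v0, ..., vm] has m arrows, so this is the n-th power of the ideal generated
  by the arrows; for n = 1 it is the arrow ideal itself.\<close>

definition arrow_pow :: "nat set \<Rightarrow> (nat \<Rightarrow> nat \<Rightarrow> bool) \<Rightarrow> nat \<Rightarrow> (nat list \<Rightarrow> 'k::field) set" where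
  "arrow_pow V E n = {x \<in> carrier (path_algebra V E). \<forall>p. length p \<le> n \<longrightarrow> x p = 0}"

lemma arrow_pow_0: "arrow_pow V E 0 = carrier (path_algebra V E)"
  by (auto simp: arrow_pow_def dest: path_algebra_elem_valid valid_path_not_Nil)

lemma arrow_pow_mult:
  assumes "x \<in> arrow_pow V E m" "y \<in> arrow_pow V E n"
  shows "x \<otimes>\<^bsub>path_algebra V E\<^esub> y \<in> (arrow_pow V E (m + n) :: (nat list \<Rightarrow> 'k::field) set)"
proof -
  have x: "\<And>p. length p \<le> m \<Longrightarrow> x p = 0" and y: "\<And>p. length p \<le> n \<Longrightarrow> y p = 0"
    using assms by (auto simp: arrow_pow_def)
  have "(x \<otimes>\<^bsub>path_algebra V E\<^esub> y) r = 0" if "length r \<le> m + n" for r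
  proof -
    have "length (take (Suc k) r) \<le> m \<or> length (drop k r) \<le> n" if "k < length r" for k
      using that \<open>length r \<le> m + n\<close> by auto
    then have "\<forall>k<length r. x (take (Suc k) r) * y (drop k r) = 0"
      using x y by (metis mult_zero_left mult_zero_right)
    then show ?thesis by (simp add: path_algebra_simps del: mult_eq_0_iff)
  qed
  with assms show ?thesis by (auto simp: arrow_pow_def path_algebra_mult_closed)
qed

lemma arrow_pow_add:
  "x \<in> arrow_pow V E n \<Longrightarrow> y \<in> arrow_pow V E n \<Longrightarrow>
    x \<oplus>\<^bsub>path_algebra V E\<^esub> y \<in> (arrow_pow V E n :: (nat list \<Rightarrow> 'k::field) set)"
  unfolding arrow_pow_def by (auto simp: path_algebra_add_closed) (simp add: path_algebra_simps)

lemma ideal_arrow_pow: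
  assumes "finite V"
  shows "ideal (arrow_pow V E n :: (nat list \<Rightarrow> 'k::field) set) (path_algebra V E)"
proof -
  interpret ring "path_algebra V E :: (nat list \<Rightarrow> 'k) ring"
    using assms by (rule ring_path_algebra)
  have sub: "arrow_pow V E n \<subseteq> carrier (path_algebra V E :: (nat list \<Rightarrow> 'k) ring)"
    by (auto simp: arrow_pow_def)
  have l_closed: "x \<otimes>\<^bsub>path_algebra V E\<^esub> a \<in> arrow_pow V E n"
    if "a \<in> arrow_pow V E n" "x \<in> carrier (path_algebra V E)" for a x :: "nat list \<Rightarrow> 'k"
    using arrow_pow_mult[of x V E 0 a n] that by (simp add: arrow_pow_0)
  have r_closed: "a \<otimes>\<^bsub>path_algebra V E\<^esub> x \<in> arrow_pow V E n"
    if "a \<in> arrow_pow V E n" "x \<in> carrier (path_algebra V E)" for a x :: "nat list \<Rightarrow> 'k"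
    using arrow_pow_mult[of a V E n x 0] that by (simp add: arrow_pow_0)
  have "\<ominus>\<^bsub>path_algebra V E\<^esub> a \<in> arrow_pow V E n" if "a \<in> arrow_pow V E n" for a :: "nat list \<Rightarrow> 'k"
  proof -
    have "a \<in> carrier (path_algebra V E)" using that sub by blast
    then have "\<ominus>\<^bsub>path_algebra V E\<^esub> a = (\<ominus>\<^bsub>path_algebra V E\<^esub> \<one>\<^bsub>path_algebra V E\<^esub>) \<otimes>\<^bsub>path_algebra V E\<^esub> a"
      by (simp add: l_minus)
    then show ?thesis using l_closed[OF that] by simp
  qed
  moreover have "\<zero>\<^bsub>path_algebra V E\<^esub> \<in> (arrow_pow V E n :: (nat list \<Rightarrow> 'k) set)"
    by (simp add: arrow_pow_def path_algebra_simps)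
  ultimately have "subgroup (arrow_pow V E n) (add_monoid (path_algebra V E :: (nat list \<Rightarrow> 'k) ring))"
    using sub by (intro add.subgroupI) (auto simp: arrow_pow_add a_inv_def[symmetric])
  then show ?thesis using l_closed r_closed by (intro idealI) (simp_all add: ring_axioms)
qed

lemma arrow_pow_induct [consumes 1, case_names zero add]:
  fixes x :: "nat list \<Rightarrow> 'k::field"
  assumes x: "x \<in> arrow_pow V E n"
    and zero: "P \<zero>\<^bsub>path_algebra V E\<^esub>"
    and step: "\<And>c p y. valid_path V E p \<Longrightarrow> n < length p \<Longrightarrow> y \<in> arrow_pow V E n \<Longrightarrow> P y \<Longrightarrow>
       P (pa_scalar V E c \<otimes>\<^bsub>path_algebra V E\<^esub> basis_path p \<oplus>\<^bsub>path_algebra V E\<^esub> y)"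
  shows "P x"
proof -
  have "finite {p. x p \<noteq> 0}" using x by (simp add: arrow_pow_def path_algebra_simps)
  moreover have "\<forall>x \<in> (arrow_pow V E n :: (nat list \<Rightarrow> 'k) set). {p. x p \<noteq> 0} \<subseteq> S \<longrightarrow> P x" if "finite S" for S
    using that
  proof (induction S rule: finite_induct)
    case empty
    have "x = \<zero>\<^bsub>path_algebra V E\<^esub>" if "{p. x p \<noteq> 0} \<subseteq> {}" for x :: "nat list \<Rightarrow> 'k"
      using that by (auto simp: path_algebra_simps)
    with zero show ?case by blast
  next
    case (insert p S)
    show ?case
    proof (intro ballI impI)
      fix x :: "nat list \<Rightarrow> 'k" assume x: "x \<in> arrow_pow V E n" and supp: "{p. x p \<noteq> 0} \<subseteq> insert p S"
      define y where "y = x(p := 0)"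
      have y: "y \<in> arrow_pow V E n"
      proof -
        have "{r. y r \<noteq> 0} \<subseteq> {r. x r \<noteq> 0}" by (auto simp: y_def)
        with x show ?thesis by (auto simp: arrow_pow_def path_algebra_simps y_def intro: finite_subset)
      qed
      have "{r. y r \<noteq> 0} \<subseteq> S" using supp by (auto simp: y_def)
      with insert.IH y have "P y" by blast
      show "P x"
      proof (cases "x p = 0")
        case True
        then show ?thesis using \<open>P y\<close> by (simp add: y_def fun_upd_idem)
      next
        case False
        then have p: "valid_path V E p" "n < length p"
          using x by (auto simp: arrow_pow_def path_algebra_simps not_le[symmetric])
        have x_eq: "x = pa_scalar V E (x p) \<otimes>\<^bsub>path_algebra V E\<^esub> basis_path p \<oplus>\<^bsub>path_algebra V E\<^esub> y"
          unfolding path_algebra_mult_scalar_left[OF basis_path_carrier[OF p(1)]]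
          by (auto simp: path_algebra_simps y_def basis_path_def)
        show ?thesis by (subst x_eq) (rule step[OF p y \<open>P y\<close>])
      qed
    qed
  qed
  ultimately show ?thesis using x by blast
qed

definition corner :: "nat \<Rightarrow> nat \<Rightarrow> (nat list \<Rightarrow> 'k::field) \<Rightarrow> nat list \<Rightarrow> 'k" where
  "corner k l y = (\<lambda>r. if hd r = k \<and> last r = l then y r else 0)"

lemma corner_closed:
  assumes "y \<in> carrier (path_algebra V E)"
  shows "corner k l y \<in> carrier (path_algebra V E)"
proof -
  have "{r. corner k l y r \<noteq> 0} \<subseteq> {r. y r \<noteq> 0}" by (auto simp: corner_def)
  with assms show ?thesis by (auto simp: path_algebra_simps corner_def intro: finite_subset)
qed

lemma basis_path_vertex_mult_mult:
  assumes y: "y \<in> carrier (path_algebra V E)" and "k \<in> V" "l \<in> V"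
  shows "basis_path [k] \<otimes>\<^bsub>path_algebra V E\<^esub> y \<otimes>\<^bsub>path_algebra V E\<^esub> basis_path [l] =
    corner k l (y :: nat list \<Rightarrow> 'k::field)"
proof -
  have vertex: "\<forall>p. length p \<noteq> 1 \<longrightarrow> (basis_path [i] p :: 'k) = 0" for i
    by (simp add: basis_path_def)
  have "basis_path [k] \<otimes>\<^bsub>path_algebra V E\<^esub> y = (\<lambda>r. if hd r = k then y r else 0)"
    using path_algebra_mult_vertex_left[OF vertex y] by (auto simp: basis_path_def)
  moreover have "basis_path [k] \<otimes>\<^bsub>path_algebra V E\<^esub> y \<in> carrier (path_algebra V E)"
    using assms by (simp add: path_algebra_mult_closed basis_path_carrier valid_path_singleton)
  ultimately show ?thesis
    using path_algebra_mult_vertex_right[OF vertex] by (auto simp: basis_path_def corner_def)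
qed

lemma corner_basis_path:
  "p \<noteq> [] \<Longrightarrow> hd p = k \<Longrightarrow> last p = l \<Longrightarrow> corner k l (basis_path p) = basis_path p"
  by (auto simp: corner_def basis_path_def)

lemma corner_in_arrow_pow_1:
  assumes "y \<in> carrier (path_algebra V E)" "k \<noteq> l"
  shows "corner k l y \<in> (arrow_pow V E 1 :: (nat list \<Rightarrow> 'k::field) set)"
proof -
  have "y [] = 0" using path_algebra_elem_valid[OF assms(1)] valid_path_not_Nil by blast
  with assms corner_closed[OF assms(1)] show ?thesis
    by (auto simp: arrow_pow_def corner_def le_Suc_eq length_Suc_conv)
qed

lemma corner_in_arrow_pow_2:
  assumes y: "y \<in> carrier (path_algebra V E)" and "k \<noteq> l" "\<not> E k l"
  shows "corner k l y \<in> (arrow_pow V E 2 :: (nat list \<Rightarrow> 'k::field) set)"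
proof -
  have "corner k l y r = 0" if "length r \<le> 2" for r
  proof (rule ccontr)
    assume "corner k l y r \<noteq> 0"
    then have r: "hd r = k" "last r = l" "valid_path V E r"
      using path_algebra_elem_valid[OF y] by (auto simp: corner_def split: if_splits)
    then consider a where "r = [a]" | a b where "r = [a, b]"
      using \<open>length r \<le> 2\<close> valid_path_not_Nil[OF r(3)]
      by (cases r; cases "tl r") (auto simp: le_Suc_eq)
    then show False
      by cases (use r assms(2,3) in \<open>auto simp: valid_path_def\<close>)
  qed
  then show ?thesis using corner_closed[OF y] by (simp add: arrow_pow_def)
qed

section \<open>The preprojective algebra\<close>

definition pp_arrow_pow :: "nat set \<Rightarrow> (nat \<Rightarrow> nat \<Rightarrow> bool) \<Rightarrow> nat \<Rightarrow> (nat list \<Rightarrow> 'k::field) set set" where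
  "pp_arrow_pow V E n = pp_class V E ` arrow_pow V E n"

locale simple_quiver =
  fixes V :: "nat set" and E :: "nat \<Rightarrow> nat \<Rightarrow> bool"
  assumes simple: "simple_graph V E"
begin

lemma finite_V: "finite V"
  using simple by (simp add: simple_graph_def)

lemma preproj_rel_in_arrow_pow_2:
  assumes i: "i \<in> V"
  shows "(preproj_rel V E i :: nat list \<Rightarrow> 'k::field) \<in> arrow_pow V E 2"
proof -
  have "valid_path V E p" if "(preproj_rel V E i p :: 'k) \<noteq> 0" for p
  proof -
    from that obtain j where j: "j \<in> V" "E i j" "p = [i, j, i]"
      by (auto simp: preproj_rel_def split: if_splits)
    then have "E j i" using simple by (simp add: simple_graph_def)
    with j i show ?thesis by (auto simp: valid_path_def less_Suc_eq nth_Cons')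
  qed
  moreover have "{p. (preproj_rel V E i p :: 'k) \<noteq> 0} \<subseteq> (\<lambda>j. [i, j, i]) ` V"
    by (auto simp: preproj_rel_def split: if_splits)
  then have "finite {p. (preproj_rel V E i p :: 'k) \<noteq> 0}"
    using finite_V by (rule finite_subset[OF _ finite_imageI])
  ultimately show ?thesis by (auto simp: arrow_pow_def path_algebra_simps preproj_rel_def)
qed

lemma ideal_preproj_ideal: "ideal (preproj_ideal V E :: (nat list \<Rightarrow> 'k::field) set) (path_algebra V E)"
  and preproj_ideal_subset: "(preproj_ideal V E :: (nat list \<Rightarrow> 'k::field) set) \<subseteq> arrow_pow V E 2"
proof -
  interpret ring "path_algebra V E :: (nat list \<Rightarrow> 'k) ring"
    using finite_V by (rule ring_path_algebra)
  have rels: "(preproj_rel V E ` V :: (nat list \<Rightarrow> 'k) set) \<subseteq> arrow_pow V E 2"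
    using preproj_rel_in_arrow_pow_2 by blast
  then show "ideal (preproj_ideal V E :: (nat list \<Rightarrow> 'k) set) (path_algebra V E)"
    unfolding preproj_ideal_def by (intro genideal_ideal) (auto simp: arrow_pow_def)
  show "(preproj_ideal V E :: (nat list \<Rightarrow> 'k) set) \<subseteq> arrow_pow V E 2"
    using rels unfolding preproj_ideal_def by (rule genideal_minimal[OF ideal_arrow_pow[OF finite_V]])
qed

lemma pp_class_eq_a_r_coset:
  "pp_class V E = (a_r_coset (path_algebra V E) (preproj_ideal V E) :: (nat list \<Rightarrow> 'k::field) \<Rightarrow> _)"
  by (rule ext) (simp add: pp_class_def)

lemma ring_preproj_algebra: "ring (preproj_algebra V E :: (nat list \<Rightarrow> 'k::field) set ring)"
  unfolding preproj_algebra_def by (rule ideal.quotient_is_ring[OF ideal_preproj_ideal])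

lemma pp_class_ring_hom:
  "(pp_class V E :: (nat list \<Rightarrow> 'k::field) \<Rightarrow> _) \<in> ring_hom (path_algebra V E) (preproj_algebra V E)"
  unfolding preproj_algebra_def pp_class_eq_a_r_coset by (rule ideal.rcos_ring_hom[OF ideal_preproj_ideal])

lemma carrier_preproj_algebra:
  "carrier (preproj_algebra V E :: (nat list \<Rightarrow> 'k::field) set ring) = pp_class V E ` carrier (path_algebra V E)"
  unfolding preproj_algebra_def FactRing_def A_RCOSETS_def' pp_class_def by auto

lemma pp_class_closed:
  "x \<in> carrier (path_algebra V E) \<Longrightarrow> pp_class V E x \<in> carrier (preproj_algebra V E :: (nat list \<Rightarrow> 'k::field) set ring)"
  by (simp add: carrier_preproj_algebra)

lemma idem_closed: "i \<in> V \<Longrightarrow> pp_class V E (triv_path i) \<in> carrier (preproj_algebra V E :: (nat list \<Rightarrow> 'k::field) set ring)"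
  by (simp add: pp_class_closed triv_path_eq_basis_path basis_path_carrier valid_path_singleton)

lemma ideal_pp_arrow_pow:
  "ideal (pp_arrow_pow V E n :: (nat list \<Rightarrow> 'k::field) set set) (preproj_algebra V E)"
  unfolding pp_arrow_pow_def preproj_algebra_def pp_class_eq_a_r_coset
  by (rule ring.ring_ideal_imp_quot_ideal[OF ring_path_algebra[OF finite_V]
        ideal_preproj_ideal ideal_arrow_pow[OF finite_V]])

lemma pp_arrow_pow_0:
  "pp_arrow_pow V E 0 = (carrier (preproj_algebra V E) :: (nat list \<Rightarrow> 'k::field) set set)"
  by (simp add: pp_arrow_pow_def arrow_pow_0 carrier_preproj_algebra)

lemma pp_arrow_pow_mult:
  assumes "a \<in> pp_arrow_pow V E m" "b \<in> pp_arrow_pow V E n"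
  shows "a \<otimes>\<^bsub>preproj_algebra V E\<^esub> b \<in> (pp_arrow_pow V E (m + n) :: (nat list \<Rightarrow> 'k::field) set set)"
proof -
  obtain x y where xy: "x \<in> arrow_pow V E m" "y \<in> arrow_pow V E n"
    and ab: "a = pp_class V E x" "b = pp_class V E y"
    using assms by (auto simp: pp_arrow_pow_def)
  then have "x \<in> carrier (path_algebra V E)" "y \<in> carrier (path_algebra V E)"
    by (auto simp: arrow_pow_def)
  then have "a \<otimes>\<^bsub>preproj_algebra V E\<^esub> b = pp_class V E (x \<otimes>\<^bsub>path_algebra V E\<^esub> y)"
    unfolding ab by (rule ring_hom_mult[OF pp_class_ring_hom, symmetric])
  then show ?thesis using arrow_pow_mult[OF xy] by (simp add: pp_arrow_pow_def)
qed

text \<open>This holds because the preprojective relations lie in the square of the arrow ideal.\<close>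

lemma pp_class_in_pp_arrow_pow_2:
  assumes x: "x \<in> carrier (path_algebra V E)" and "pp_class V E x \<in> pp_arrow_pow V E 2"
  shows "(x :: nat list \<Rightarrow> 'k::field) \<in> arrow_pow V E 2"
proof -
  interpret ideal "preproj_ideal V E :: (nat list \<Rightarrow> 'k) set" "path_algebra V E"
    by (rule ideal_preproj_ideal)
  obtain y where y: "y \<in> arrow_pow V E 2" "pp_class V E x = pp_class V E y"
    using assms(2) by (auto simp: pp_arrow_pow_def)
  have "x \<in> preproj_ideal V E +>\<^bsub>path_algebra V E\<^esub> y"
    using a_rcos_self[OF x] y(2) by (simp add: pp_class_def)
  then obtain h where "h \<in> preproj_ideal V E" "x = h \<oplus>\<^bsub>path_algebra V E\<^esub> y"
    unfolding a_r_coset_def' by auto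
  with preproj_ideal_subset y(1) show ?thesis by (auto intro: arrow_pow_add)
qed

lemma idem_mult_mult_idem:
  assumes "y \<in> carrier (path_algebra V E)" "k \<in> V" "l \<in> V"
  shows "pp_class V E (triv_path k) \<otimes>\<^bsub>preproj_algebra V E\<^esub> pp_class V E y \<otimes>\<^bsub>preproj_algebra V E\<^esub> pp_class V E (triv_path l) = pp_class V E (corner k l (y :: nat list \<Rightarrow> 'k::field))"
proof -
  have "basis_path [i] \<in> (carrier (path_algebra V E) :: (nat list \<Rightarrow> 'k) set)" if "i \<in> V" for i
    using that by (simp add: basis_path_carrier valid_path_singleton)
  with assms show ?thesis
    by (simp add: triv_path_eq_basis_path ring_hom_mult[OF pp_class_ring_hom, symmetric]
        path_algebra_mult_closed basis_path_vertex_mult_mult)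
qed

lemma idem_mult_mult_idem_in_pp_arrow_pow_1:
  assumes "k \<in> V" "l \<in> V" "k \<noteq> l" and w: "w \<in> carrier (preproj_algebra V E :: (nat list \<Rightarrow> 'k::field) set ring)"
  shows "pp_class V E (triv_path k) \<otimes>\<^bsub>preproj_algebra V E\<^esub> w \<otimes>\<^bsub>preproj_algebra V E\<^esub> pp_class V E (triv_path l) \<in> (pp_arrow_pow V E 1 :: (nat list \<Rightarrow> 'k) set set)"
proof -
  obtain y where y: "y \<in> carrier (path_algebra V E)" "w = pp_class V E y"
    using w by (auto simp: carrier_preproj_algebra)
  with assms corner_in_arrow_pow_1[OF y(1) \<open>k \<noteq> l\<close>] show ?thesis
    by (auto simp: idem_mult_mult_idem pp_arrow_pow_def)
qed

end

section \<open>Automorphisms permuting the vertex idempotents up to conjugation\<close>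

locale preproj_conj_aut = simple_quiver +
  fixes \<phi> :: "(nat list \<Rightarrow> 'k::field) set \<Rightarrow> (nat list \<Rightarrow> 'k) set"
    and \<rho> :: "nat \<Rightarrow> nat" and u :: "(nat list \<Rightarrow> 'k) set"
  assumes aut: "\<phi> \<in> preproj_aut V E"
    and bij: "bij_betw \<rho> V V"
    and unit: "u \<in> Units (preproj_algebra V E)"
    and conj_idem: "\<forall>i\<in>V. \<phi> (pp_class V E (triv_path i)) =
      u \<otimes>\<^bsub>preproj_algebra V E\<^esub> pp_class V E (triv_path (\<rho> i))
        \<otimes>\<^bsub>preproj_algebra V E\<^esub> inv\<^bsub>preproj_algebra V E\<^esub> u"
begin

abbreviation \<Lambda> :: "(nat list \<Rightarrow> 'k) set ring" where
  "\<Lambda> \<equiv> preproj_algebra V E"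

abbreviation idem :: "nat \<Rightarrow> (nat list \<Rightarrow> 'k) set" where
  "idem i \<equiv> pp_class V E (triv_path i)"

sublocale \<Lambda>: ring "\<Lambda> :: (nat list \<Rightarrow> 'k) set ring"
  by (rule ring_preproj_algebra)

lemma phi_ring_hom: "\<phi> \<in> ring_hom \<Lambda> \<Lambda>"
  using aut by (simp add: preproj_aut_def ring_iso_def)

lemma phi_image: "\<phi> ` carrier \<Lambda> = carrier \<Lambda>"
  using aut by (simp add: preproj_aut_def ring_iso_def bij_betw_def)

lemma phi_scalar: "\<phi> (pp_class V E (pa_scalar V E c)) = pp_class V E (pa_scalar V E c)"
  using aut by (simp add: preproj_aut_def)

lemma phi_idem_mult_mult_idem:
  assumes "a \<in> V" "b \<in> V" "x \<in> carrier \<Lambda>"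
  shows "\<phi> (idem a \<otimes>\<^bsub>\<Lambda>\<^esub> x \<otimes>\<^bsub>\<Lambda>\<^esub> idem b) =
    u \<otimes>\<^bsub>\<Lambda>\<^esub> (idem (\<rho> a) \<otimes>\<^bsub>\<Lambda>\<^esub> (inv\<^bsub>\<Lambda>\<^esub> u \<otimes>\<^bsub>\<Lambda>\<^esub> \<phi> x \<otimes>\<^bsub>\<Lambda>\<^esub> u) \<otimes>\<^bsub>\<Lambda>\<^esub> idem (\<rho> b)) \<otimes>\<^bsub>\<Lambda>\<^esub> inv\<^bsub>\<Lambda>\<^esub> u"
proof -
  have "\<rho> a \<in> V" "\<rho> b \<in> V" using assms bij by (auto simp: bij_betw_def)
  then have closed: "idem (\<rho> a) \<in> carrier \<Lambda>" "idem (\<rho> b) \<in> carrier \<Lambda>" "\<phi> x \<in> carrier \<Lambda>"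
    "u \<in> carrier \<Lambda>" "inv\<^bsub>\<Lambda>\<^esub> u \<in> carrier \<Lambda>"
    using idem_closed ring_hom_closed[OF phi_ring_hom assms(3)] unit by auto
  have "\<phi> (idem a \<otimes>\<^bsub>\<Lambda>\<^esub> x \<otimes>\<^bsub>\<Lambda>\<^esub> idem b) = \<phi> (idem a) \<otimes>\<^bsub>\<Lambda>\<^esub> \<phi> x \<otimes>\<^bsub>\<Lambda>\<^esub> \<phi> (idem b)"
    using ring_hom_mult[OF phi_ring_hom \<Lambda>.m_closed[OF idem_closed[OF assms(1)] assms(3)] idem_closed[OF assms(2)]]
      ring_hom_mult[OF phi_ring_hom idem_closed[OF assms(1)] assms(3)]
    by simp
  also have "\<dots> = (u \<otimes>\<^bsub>\<Lambda>\<^esub> idem (\<rho> a) \<otimes>\<^bsub>\<Lambda>\<^esub> inv\<^bsub>\<Lambda>\<^esub> u) \<otimes>\<^bsub>\<Lambda>\<^esub> \<phi> x \<otimes>\<^bsub>\<Lambda>\<^esub>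
      (u \<otimes>\<^bsub>\<Lambda>\<^esub> idem (\<rho> b) \<otimes>\<^bsub>\<Lambda>\<^esub> inv\<^bsub>\<Lambda>\<^esub> u)"
    using assms conj_idem by simp
  also have "\<dots> = u \<otimes>\<^bsub>\<Lambda>\<^esub> (idem (\<rho> a) \<otimes>\<^bsub>\<Lambda>\<^esub> (inv\<^bsub>\<Lambda>\<^esub> u \<otimes>\<^bsub>\<Lambda>\<^esub> \<phi> x \<otimes>\<^bsub>\<Lambda>\<^esub> u) \<otimes>\<^bsub>\<Lambda>\<^esub> idem (\<rho> b)) \<otimes>\<^bsub>\<Lambda>\<^esub> inv\<^bsub>\<Lambda>\<^esub> u"
    using closed by (simp add: \<Lambda>.m_assoc)
  finally show ?thesis .
qed

lemma phi_arrow_in_pp_arrow_pow_1: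
  assumes "E a b"
  shows "\<phi> (pp_class V E (basis_path [a, b])) \<in> pp_arrow_pow V E 1"
proof -
  interpret J: ideal "pp_arrow_pow V E 1" \<Lambda> by (rule ideal_pp_arrow_pow)
  have ab: "a \<in> V" "b \<in> V" "a \<noteq> b" using assms simple by (auto simp: simple_graph_def)
  then have \<rho>ab: "\<rho> a \<in> V" "\<rho> b \<in> V" "\<rho> a \<noteq> \<rho> b"
    using bij by (auto simp: bij_betw_def inj_on_def)
  have arrow: "basis_path [a, b] \<in> carrier (path_algebra V E)"
    using assms ab by (intro basis_path_carrier) (auto simp: valid_path_def less_Suc_eq)
  define B :: "(nat list \<Rightarrow> 'k) set" where "B = pp_class V E (basis_path [a, b])"
  define w where "w = inv\<^bsub>\<Lambda>\<^esub> u \<otimes>\<^bsub>\<Lambda>\<^esub> \<phi> B \<otimes>\<^bsub>\<Lambda>\<^esub> u"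
  have B: "B \<in> carrier \<Lambda>" unfolding B_def using arrow by (rule pp_class_closed)
  have "B = idem a \<otimes>\<^bsub>\<Lambda>\<^esub> B \<otimes>\<^bsub>\<Lambda>\<^esub> idem b"
    unfolding B_def by (simp add: idem_mult_mult_idem[OF arrow ab(1,2)] corner_basis_path)
  then have "\<phi> B = u \<otimes>\<^bsub>\<Lambda>\<^esub> (idem (\<rho> a) \<otimes>\<^bsub>\<Lambda>\<^esub> w \<otimes>\<^bsub>\<Lambda>\<^esub> idem (\<rho> b)) \<otimes>\<^bsub>\<Lambda>\<^esub> inv\<^bsub>\<Lambda>\<^esub> u"
    unfolding w_def by (metis phi_idem_mult_mult_idem[OF ab(1,2) B])
  moreover have M: "idem (\<rho> a) \<otimes>\<^bsub>\<Lambda>\<^esub> w \<otimes>\<^bsub>\<Lambda>\<^esub> idem (\<rho> b) \<in> pp_arrow_pow V E 1"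
    unfolding w_def using \<rho>ab unit ring_hom_closed[OF phi_ring_hom B]
    by (intro idem_mult_mult_idem_in_pp_arrow_pow_1) auto
  ultimately show ?thesis
    unfolding B_def[symmetric] using J.Units_conj_mem_iff[OF unit J.Icarr[OF M]] M by simp
qed

lemma phi_basis_path_in_pp_arrow_pow:
  assumes "valid_path V E p" "n < length p"
  shows "\<phi> (pp_class V E (basis_path p)) \<in> pp_arrow_pow V E n"
  using assms
proof (induction n arbitrary: p)
  case 0
  then show ?case
    using ring_hom_closed[OF phi_ring_hom pp_class_closed[OF basis_path_carrier]]
    by (simp add: pp_arrow_pow_0)
next
  case (Suc n)
  then obtain a b q where p: "p = a # b # q"
    by (cases p; cases "tl p") auto
  have "E a b" using Suc.prems(1) by (auto simp: p valid_path_def)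
  have rest: "valid_path V E (b # q)" "n < length (b # q)"
    using Suc.prems valid_path_drop[OF Suc.prems(1), of 1] by (auto simp: p)
  have carrier: "basis_path [a, b] \<in> carrier (path_algebra V E)"
    "basis_path (b # q) \<in> carrier (path_algebra V E)"
    using valid_path_take[OF Suc.prems(1), of 2] rest(1) by (auto simp: p intro: basis_path_carrier)
  have "pp_class V E (basis_path p) =
      pp_class V E (basis_path [a, b]) \<otimes>\<^bsub>\<Lambda>\<^esub> pp_class V E (basis_path (b # q))"
    using Suc.prems(1) by (simp add: p basis_path_Cons_Cons ring_hom_mult[OF pp_class_ring_hom carrier])
  then have "\<phi> (pp_class V E (basis_path p)) =
      \<phi> (pp_class V E (basis_path [a, b])) \<otimes>\<^bsub>\<Lambda>\<^esub> \<phi> (pp_class V E (basis_path (b # q)))"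
    by (simp add: ring_hom_mult[OF phi_ring_hom pp_class_closed pp_class_closed] carrier)
  then show ?case
    using pp_arrow_pow_mult[OF phi_arrow_in_pp_arrow_pow_1[OF \<open>E a b\<close>] Suc.IH[OF rest]] by simp
qed

lemma phi_pp_arrow_pow:
  assumes "x \<in> arrow_pow V E n"
  shows "\<phi> (pp_class V E x) \<in> pp_arrow_pow V E n"
  using assms
proof (induction rule: arrow_pow_induct)
  interpret J: ideal "pp_arrow_pow V E n" \<Lambda> by (rule ideal_pp_arrow_pow)
  case zero
  have "pp_class V E \<zero>\<^bsub>path_algebra V E\<^esub> = \<zero>\<^bsub>\<Lambda>\<^esub>"
    by (rule ring_hom_zero[OF pp_class_ring_hom ring_path_algebra[OF finite_V] ring_preproj_algebra])
  moreover have "\<phi> \<zero>\<^bsub>\<Lambda>\<^esub> = \<zero>\<^bsub>\<Lambda>\<^esub>"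
    by (rule ring_hom_zero[OF phi_ring_hom ring_preproj_algebra ring_preproj_algebra])
  ultimately show ?case by (simp add: J.zero_closed)
next
  interpret J: ideal "pp_arrow_pow V E n" \<Lambda> by (rule ideal_pp_arrow_pow)
  case (add c p y)
  have carrier: "pa_scalar V E c \<in> carrier (path_algebra V E)"
    "(basis_path p :: nat list \<Rightarrow> 'k) \<in> carrier (path_algebra V E)"
    "y \<in> carrier (path_algebra V E)"
    using add.hyps by (auto simp: arrow_pow_def intro: pa_scalar_closed[OF finite_V] basis_path_carrier)
  let ?s = "pp_class V E (pa_scalar V E c) :: (nat list \<Rightarrow> 'k) set"
  let ?b = "pp_class V E (basis_path p) :: (nat list \<Rightarrow> 'k) set"
  have "pp_class V E (pa_scalar V E c \<otimes>\<^bsub>path_algebra V E\<^esub> basis_path p \<oplus>\<^bsub>path_algebra V E\<^esub> y) =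
      ?s \<otimes>\<^bsub>\<Lambda>\<^esub> ?b \<oplus>\<^bsub>\<Lambda>\<^esub> pp_class V E y"
    using ring_hom_add[OF pp_class_ring_hom path_algebra_mult_closed[OF carrier(1,2)] carrier(3)]
      ring_hom_mult[OF pp_class_ring_hom carrier(1,2)]
    by simp
  moreover have "?s \<in> carrier \<Lambda>" "?b \<in> carrier \<Lambda>" "pp_class V E y \<in> carrier \<Lambda>"
    using carrier by (simp_all add: pp_class_closed)
  ultimately have "\<phi> (pp_class V E (pa_scalar V E c \<otimes>\<^bsub>path_algebra V E\<^esub> basis_path p \<oplus>\<^bsub>path_algebra V E\<^esub> y)) =
      ?s \<otimes>\<^bsub>\<Lambda>\<^esub> \<phi> ?b \<oplus>\<^bsub>\<Lambda>\<^esub> \<phi> (pp_class V E y)"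
    by (simp add: ring_hom_add[OF phi_ring_hom] ring_hom_mult[OF phi_ring_hom] phi_scalar)
  with \<open>?s \<in> carrier \<Lambda>\<close> show ?case
    using phi_basis_path_in_pp_arrow_pow[OF add.hyps(1,2)] add.IH
    by (simp add: J.I_l_closed J.a_closed)
qed

lemma phi_reflects_edges:
  assumes ij: "i \<in> V" "j \<in> V" and edge: "E (\<rho> i) (\<rho> j)"
  shows "E i j"
proof (rule ccontr)
  assume "\<not> E i j"
  interpret J: ideal "pp_arrow_pow V E 2" \<Lambda> by (rule ideal_pp_arrow_pow)
  have \<rho>ij: "\<rho> i \<in> V" "\<rho> j \<in> V" "\<rho> i \<noteq> \<rho> j"
    using edge simple by (auto simp: simple_graph_def)
  then have "i \<noteq> j" by auto
  define \<beta> :: "nat list \<Rightarrow> 'k" where "\<beta> = basis_path [\<rho> i, \<rho> j]"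
  define B where "B = pp_class V E \<beta>"
  have \<beta>: "\<beta> \<in> carrier (path_algebra V E)"
    unfolding \<beta>_def using edge \<rho>ij by (intro basis_path_carrier) (auto simp: valid_path_def less_Suc_eq)
  then have B: "B \<in> carrier \<Lambda>" unfolding B_def by (rule pp_class_closed)
  have "u \<otimes>\<^bsub>\<Lambda>\<^esub> B \<otimes>\<^bsub>\<Lambda>\<^esub> inv\<^bsub>\<Lambda>\<^esub> u \<in> carrier \<Lambda>"
    using B unit by (simp add: \<Lambda>.Units_closed \<Lambda>.Units_inv_closed)
  then have "u \<otimes>\<^bsub>\<Lambda>\<^esub> B \<otimes>\<^bsub>\<Lambda>\<^esub> inv\<^bsub>\<Lambda>\<^esub> u \<in> \<phi> ` carrier \<Lambda>"
    by (simp only: phi_image)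
  then obtain c where c: "c \<in> carrier \<Lambda>" "\<phi> c = u \<otimes>\<^bsub>\<Lambda>\<^esub> B \<otimes>\<^bsub>\<Lambda>\<^esub> inv\<^bsub>\<Lambda>\<^esub> u"
    by auto
  then obtain x where x: "x \<in> carrier (path_algebra V E)"
    and \<phi>x: "\<phi> (pp_class V E x) = u \<otimes>\<^bsub>\<Lambda>\<^esub> B \<otimes>\<^bsub>\<Lambda>\<^esub> inv\<^bsub>\<Lambda>\<^esub> u"
    by (auto simp: carrier_preproj_algebra)
  have "idem i \<otimes>\<^bsub>\<Lambda>\<^esub> pp_class V E x \<otimes>\<^bsub>\<Lambda>\<^esub> idem j = pp_class V E (corner i j x)"
    using x ij by (rule idem_mult_mult_idem)
  then have "\<phi> (idem i \<otimes>\<^bsub>\<Lambda>\<^esub> pp_class V E x \<otimes>\<^bsub>\<Lambda>\<^esub> idem j) \<in> pp_arrow_pow V E 2"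
    using phi_pp_arrow_pow corner_in_arrow_pow_2[OF x \<open>i \<noteq> j\<close> \<open>\<not> E i j\<close>] by simp
  moreover have "\<phi> (idem i \<otimes>\<^bsub>\<Lambda>\<^esub> pp_class V E x \<otimes>\<^bsub>\<Lambda>\<^esub> idem j) = u \<otimes>\<^bsub>\<Lambda>\<^esub> B \<otimes>\<^bsub>\<Lambda>\<^esub> inv\<^bsub>\<Lambda>\<^esub> u"
  proof -
    have "idem (\<rho> i) \<otimes>\<^bsub>\<Lambda>\<^esub> B \<otimes>\<^bsub>\<Lambda>\<^esub> idem (\<rho> j) = B"
      unfolding B_def \<beta>_def using \<beta>[unfolded \<beta>_def] \<rho>ij
      by (simp add: idem_mult_mult_idem corner_basis_path)
    then show ?thesis
      using phi_idem_mult_mult_idem[OF ij pp_class_closed[OF x]] \<phi>x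
      by (simp add: \<Lambda>.Units_inv_conj_cancel[OF unit B])
  qed
  ultimately have "B \<in> pp_arrow_pow V E 2"
    using J.Units_conj_mem_iff[OF unit B] by simp
  then have "\<beta> \<in> arrow_pow V E 2"
    unfolding B_def using \<beta> by (rule pp_class_in_pp_arrow_pow_2[rotated])
  then have "\<beta> [\<rho> i, \<rho> j] = 0" by (simp add: arrow_pow_def)
  then show False by (simp add: \<beta>_def basis_path_def)
qed

end

theorem lemma4p6:
  fixes V :: "nat set" and E :: "nat \<Rightarrow> nat \<Rightarrow> bool"
    and \<phi> :: "(nat list \<Rightarrow> 'k::field) set \<Rightarrow> (nat list \<Rightarrow> 'k) set"
    and \<rho> :: "nat \<Rightarrow> nat" and u :: "(nat list \<Rightarrow> 'k) set"
  assumes "alg_closed TYPE('k)"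
    and "simply_laced_dynkin V E"
    and "\<phi> \<in> preproj_aut V E"
    and "bij_betw \<rho> V V"
    and "u \<in> Units (preproj_algebra V E)"
    and "\<forall>i\<in>V. \<phi> (pp_class V E (triv_path i)) =
           u \<otimes>\<^bsub>preproj_algebra V E\<^esub> pp_class V E (triv_path (\<rho> i))
             \<otimes>\<^bsub>preproj_algebra V E\<^esub> inv\<^bsub>preproj_algebra V E\<^esub> u"
  shows "graph_aut V E \<rho>"
proof -
  have simple: "simple_graph V E" using assms(2) by (simp add: simply_laced_dynkin_def)
  interpret preproj_conj_aut V E \<phi> \<rho> u
    using assms(3-6) simple by unfold_locales
  let ?R = "{(i, j). E i j}"
  have "?R \<subseteq> V \<times> V" "finite ?R"
    using simple finite_subset[of ?R "V \<times> V"] by (auto simp: simple_graph_def)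
  then have "E (\<rho> i) (\<rho> j)" if "E i j" for i j
    using bij_betw_reflects_imp_preserves[OF \<open>finite ?R\<close> assms(4), of i j] phi_reflects_edges that
    by auto
  then show ?thesis
    using assms(4) phi_reflects_edges by (auto simp: graph_aut_def)
qed

end
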